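(* In the setting described in the context, for all $\lambda>0$ and all $t\ge0$: if $R_{t\infty}>0$ then $L^{(\lambda)}_{t\infty}=\infty$, whereas if $L^{(\lambda)}_{t\infty}<\infty$ then $R_{t\infty}=0$.
   Context: Let $(\Omega,\mathcal F,\mathbb P)$ be a probability space with a filtration $\{\mathcal F_t\}_{t\ge0}$ satisfying the usual conditions; (in)equalities between random variables hold a.s. A pricing kernel is an $\{\mathcal F_t\}$-adapted càdlàg semimartingale $\{\pi_t\}_{t\ge0}$ with (a) $\pi_t>0$, (b) $\mathbb E[\pi_t]<\infty$ for all $t\ge0$, (c) $\liminf_{t\to\infty}\mathbb E[\pi_t]=0$. Fix such a pricing kernel and set $P_{tT}=\pi_t^{-1}\mathbb E[\pi_T\mid\mathcal F_t]$ for $0\le t<T$. Define the exponential rate $R_{tT}=-(T-t)^{-1}\ln P_{tT}$ and, for $\lambda>0$, the tail-Pareto rate $L^{(\lambda)}_{tT}$ by $P_{tT}=\left[1+\lambda^{-1}(T-t)L^{(\lambda)}_{tT}\right]^{-\lambda}$, i.e. $L^{(\lambda)}_{tT}=\lambda(T-t)^{-1}(P_{tT}^{-1/\lambda}-1)$. For a family $\{A_x\}_{x\in\mathbb R^+}$ of $\mathcal F_t$-measurable extended-real random variables, $\limsup_{x\to\infty}A_x:=\operatorname{ess\,inf}_{x}\operatorname{ess\,sup}_{y\ge x}A_y$, with essential supremum/infimum taken among $\mathcal F_t$-measurable random variables. The long rates are $R_{t\infty}=\limsup_{T\to\infty}R_{tT}$ and $L^{(\lambda)}_{t\infty}=\limsup_{T\to\infty}L^{(\lambda)}_{tT}$.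 *)

theory Defs
  imports "HOL-Probability.Probability"
begin

text \<open>Time is real, only t \<ge> 0 matters. A filtration F on the probability space M
satisfying the usual conditions (right-continuous, complete).\<close>

definition usual_conditions :: "'a measure \<Rightarrow> (real \<Rightarrow> 'a measure) \<Rightarrow> bool" where
  "usual_conditions M F \<longleftrightarrow>
     (\<forall>t\<ge>0. subalgebra M (F t)) \<and>
     (\<forall>s t. 0 \<le> s \<longrightarrow> s \<le> t \<longrightarrow> sets (F s) \<subseteq> sets (F t)) \<and>
     (\<forall>t\<ge>0. sets (F t) = (\<Inter>s\<in>{t<..}. sets (F s))) \<and>
     (\<forall>A. A \<subseteq> space M \<longrightarrow> (\<exists>N\<in>null_sets M. A \<subseteq> N) \<longrightarrow> A \<in> sets (F 0))"

definition adapted :: "(real \<Rightarrow> 'a measure) \<Rightarrow> (real \<Rightarrow> 'a \<Rightarrow> real) \<Rightarrow> bool" where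
  "adapted F X \<longleftrightarrow> (\<forall>t\<ge>0. X t \<in> borel_measurable (F t))"

definition cadlag :: "'a measure \<Rightarrow> (real \<Rightarrow> 'a \<Rightarrow> real) \<Rightarrow> bool" where
  "cadlag M X \<longleftrightarrow> (\<forall>\<omega>\<in>space M. \<forall>t\<ge>0.
      continuous (at_right t) (\<lambda>s. X s \<omega>) \<and>
      (t > 0 \<longrightarrow> (\<exists>l. ((\<lambda>s. X s \<omega>) \<longlongrightarrow> l) (at_left t))))"

definition martingale :: "'a measure \<Rightarrow> (real \<Rightarrow> 'a measure) \<Rightarrow> (real \<Rightarrow> 'a \<Rightarrow> real) \<Rightarrow> bool" where
  "martingale M F X \<longleftrightarrow> adapted F X \<and> (\<forall>t\<ge>0. integrable M (X t)) \<and>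
     (\<forall>s t. 0 \<le> s \<longrightarrow> s \<le> t \<longrightarrow> (AE \<omega> in M. real_cond_exp M (F s) (X t) \<omega> = X s \<omega>))"

definition ext_stopping_time :: "'a measure \<Rightarrow> (real \<Rightarrow> 'a measure) \<Rightarrow> ('a \<Rightarrow> ereal) \<Rightarrow> bool" where
  "ext_stopping_time M F \<tau> \<longleftrightarrow> (\<forall>\<omega>\<in>space M. 0 \<le> \<tau> \<omega>) \<and>
     (\<forall>t\<ge>0. {\<omega>\<in>space M. \<tau> \<omega> \<le> ereal t} \<in> sets (F t))"

definition stopped :: "(real \<Rightarrow> 'a \<Rightarrow> real) \<Rightarrow> ('a \<Rightarrow> ereal) \<Rightarrow> real \<Rightarrow> 'a \<Rightarrow> real" where
  "stopped X \<tau> = (\<lambda>t \<omega>. X (real_of_ereal (min (ereal t) (\<tau> \<omega>))) \<omega>)"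

definition local_martingale :: "'a measure \<Rightarrow> (real \<Rightarrow> 'a measure) \<Rightarrow> (real \<Rightarrow> 'a \<Rightarrow> real) \<Rightarrow> bool" where
  "local_martingale M F X \<longleftrightarrow> adapted F X \<and> cadlag M X \<and>
     (\<exists>\<tau> :: nat \<Rightarrow> 'a \<Rightarrow> ereal. (\<forall>n. ext_stopping_time M F (\<tau> n)) \<and>
        (\<forall>n. \<forall>\<omega>\<in>space M. \<tau> n \<omega> \<le> \<tau> (Suc n) \<omega>) \<and>
        (AE \<omega> in M. (\<lambda>n. \<tau> n \<omega>) \<longlonglongrightarrow> \<infinity>) \<and>
        (\<forall>n. martingale M F (stopped X (\<tau> n))))"

definition finite_variation_on :: "(real \<Rightarrow> real) \<Rightarrow> real \<Rightarrow> bool" where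
  "finite_variation_on f t \<longleftrightarrow> (\<exists>C. \<forall>(n::nat) (s::nat \<Rightarrow> real).
      0 \<le> s 0 \<longrightarrow> s n \<le> t \<longrightarrow> (\<forall>i<n. s i \<le> s (Suc i)) \<longrightarrow>
      (\<Sum>i<n. \<bar>f (s (Suc i)) - f (s i)\<bar>) \<le> C)"

definition fv_process :: "'a measure \<Rightarrow> (real \<Rightarrow> 'a measure) \<Rightarrow> (real \<Rightarrow> 'a \<Rightarrow> real) \<Rightarrow> bool" where
  "fv_process M F A \<longleftrightarrow> adapted F A \<and> cadlag M A \<and>
     (\<forall>\<omega>\<in>space M. \<forall>t\<ge>0. finite_variation_on (\<lambda>s. A s \<omega>) t)"

definition semimartingale :: "'a measure \<Rightarrow> (real \<Rightarrow> 'a measure) \<Rightarrow> (real \<Rightarrow> 'a \<Rightarrow> real) \<Rightarrow> bool" where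
  "semimartingale M F X \<longleftrightarrow> adapted F X \<and> cadlag M X \<and>
     (\<exists>N A. local_martingale M F N \<and> fv_process M F A \<and>
        (\<forall>\<omega>\<in>space M. N 0 \<omega> = 0 \<and> A 0 \<omega> = 0) \<and>
        (\<forall>t\<ge>0. \<forall>\<omega>\<in>space M. X t \<omega> = X 0 \<omega> + N t \<omega> + A t \<omega>))"

definition pricing_kernel :: "'a measure \<Rightarrow> (real \<Rightarrow> 'a measure) \<Rightarrow> (real \<Rightarrow> 'a \<Rightarrow> real) \<Rightarrow> bool" where
  "pricing_kernel M F \<pi> \<longleftrightarrow> adapted F \<pi> \<and> cadlag M \<pi> \<and> semimartingale M F \<pi> \<and>
     (\<forall>t\<ge>0. AE \<omega> in M. \<pi> t \<omega> > 0) \<and>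
     (\<forall>t\<ge>0. integrable M (\<pi> t)) \<and>
     Liminf at_top (\<lambda>t. ereal (integral\<^sup>L M (\<pi> t))) = 0"

definition bond :: "'a measure \<Rightarrow> (real \<Rightarrow> 'a measure) \<Rightarrow> (real \<Rightarrow> 'a \<Rightarrow> real) \<Rightarrow> real \<Rightarrow> real \<Rightarrow> 'a \<Rightarrow> real" where
  "bond M F \<pi> t T = (\<lambda>\<omega>. real_cond_exp M (F t) (\<pi> T) \<omega> / \<pi> t \<omega>)"

definition exp_rate :: "'a measure \<Rightarrow> (real \<Rightarrow> 'a measure) \<Rightarrow> (real \<Rightarrow> 'a \<Rightarrow> real) \<Rightarrow> real \<Rightarrow> real \<Rightarrow> 'a \<Rightarrow> real" where
  "exp_rate M F \<pi> t T = (\<lambda>\<omega>. - ln (bond M F \<pi> t T \<omega>) / (T - t))"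

definition pareto_rate :: "'a measure \<Rightarrow> (real \<Rightarrow> 'a measure) \<Rightarrow> (real \<Rightarrow> 'a \<Rightarrow> real) \<Rightarrow> real \<Rightarrow> real \<Rightarrow> real \<Rightarrow> 'a \<Rightarrow> real" where
  "pareto_rate M F \<pi> lam t T =
     (\<lambda>\<omega>. lam / (T - t) * (bond M F \<pi> t T \<omega> powr (- 1 / lam) - 1))"

definition is_ess_sup :: "'a measure \<Rightarrow> 'a measure \<Rightarrow> 'i set \<Rightarrow> ('i \<Rightarrow> 'a \<Rightarrow> ereal) \<Rightarrow> ('a \<Rightarrow> ereal) \<Rightarrow> bool" where
  "is_ess_sup M G I A Y \<longleftrightarrow> Y \<in> borel_measurable G \<and>
     (\<forall>y\<in>I. AE \<omega> in M. A y \<omega> \<le> Y \<omega>) \<and>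
     (\<forall>Z \<in> borel_measurable G. (\<forall>y\<in>I. AE \<omega> in M. A y \<omega> \<le> Z \<omega>) \<longrightarrow> (AE \<omega> in M. Y \<omega> \<le> Z \<omega>))"

definition is_ess_inf :: "'a measure \<Rightarrow> 'a measure \<Rightarrow> 'i set \<Rightarrow> ('i \<Rightarrow> 'a \<Rightarrow> ereal) \<Rightarrow> ('a \<Rightarrow> ereal) \<Rightarrow> bool" where
  "is_ess_inf M G I A Y \<longleftrightarrow> Y \<in> borel_measurable G \<and>
     (\<forall>y\<in>I. AE \<omega> in M. Y \<omega> \<le> A y \<omega>) \<and>
     (\<forall>Z \<in> borel_measurable G. (\<forall>y\<in>I. AE \<omega> in M. Z \<omega> \<le> A y \<omega>) \<longrightarrow> (AE \<omega> in M. Z \<omega> \<le> Y \<omega>))"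

definition fam_ess_sup :: "'a measure \<Rightarrow> 'a measure \<Rightarrow> 'i set \<Rightarrow> ('i \<Rightarrow> 'a \<Rightarrow> ereal) \<Rightarrow> 'a \<Rightarrow> ereal" where
  "fam_ess_sup M G I A = (SOME Y. is_ess_sup M G I A Y)"

definition fam_ess_inf :: "'a measure \<Rightarrow> 'a measure \<Rightarrow> 'i set \<Rightarrow> ('i \<Rightarrow> 'a \<Rightarrow> ereal) \<Rightarrow> 'a \<Rightarrow> ereal" where
  "fam_ess_inf M G I A = (SOME Y. is_ess_inf M G I A Y)"

definition fam_ess_limsup :: "'a measure \<Rightarrow> 'a measure \<Rightarrow> real set \<Rightarrow> (real \<Rightarrow> 'a \<Rightarrow> ereal) \<Rightarrow> 'a \<Rightarrow> ereal" where
  "fam_ess_limsup M G D A = fam_ess_inf M G {0..} (\<lambda>x. fam_ess_sup M G {y\<in>D. x \<le> y} A)"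

definition long_exp_rate :: "'a measure \<Rightarrow> (real \<Rightarrow> 'a measure) \<Rightarrow> (real \<Rightarrow> 'a \<Rightarrow> real) \<Rightarrow> real \<Rightarrow> 'a \<Rightarrow> ereal" where
  "long_exp_rate M F \<pi> t =
     fam_ess_limsup M (F t) {t<..} (\<lambda>T \<omega>. ereal (exp_rate M F \<pi> t T \<omega>))"

definition long_pareto_rate :: "'a measure \<Rightarrow> (real \<Rightarrow> 'a measure) \<Rightarrow> (real \<Rightarrow> 'a \<Rightarrow> real) \<Rightarrow> real \<Rightarrow> real \<Rightarrow> 'a \<Rightarrow> ereal" where
  "long_pareto_rate M F \<pi> lam t =
     fam_ess_limsup M (F t) {t<..} (\<lambda>T \<omega>. ereal (pareto_rate M F \<pi> lam t T \<omega>))"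

end

theory Submission
  imports Defs
begin

text \<open>If the long exponential rate exceeds \<open>c > 0\<close>, then for arbitrarily late maturities \<open>T\<close> the
bond price is below \<open>exp (-c (T - t))\<close>, and \<open>exp u \<ge> 1 + u + u\<^sup>2/2\<close> turns this into a lower
bound for the tail-Pareto rate growing linearly in \<open>T - t\<close>; so the long Pareto rate is infinite.
The second claim follows because the long exponential rate is never negative: on an
\<open>F\<^sub>t\<close>-event \<open>A\<close> where it were, all late bond prices would exceed one, giving
\<open>E[\<pi>\<^sub>T 1\<^sub>A] \<ge> E[\<pi>\<^sub>t 1\<^sub>A] > 0\<close> for all large \<open>T\<close>, against \<open>liminf E[\<pi>\<^sub>T] = 0\<close>.\<close>

definition ereal_arctan :: "ereal \<Rightarrow> real" where
  "ereal_arctan z = (case z of ereal r \<Rightarrow> arctan r | PInfty \<Rightarrow> pi/2 | MInfty \<Rightarrow> -pi/2)"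

lemma strict_mono_ereal_arctan: "strict_mono ereal_arctan"
proof
  fix z w :: ereal
  assume "z < w"
  then show "ereal_arctan z < ereal_arctan w"
    using arctan_ubound arctan_lbound arctan_less_iff
    by (cases z; cases w) (auto simp: ereal_arctan_def)
qed

lemma abs_ereal_arctan_le: "\<bar>ereal_arctan z\<bar> \<le> pi/2"
proof (cases z)
  case (real r)
  then show ?thesis
    using arctan_ubound[of r] arctan_lbound[of r] by (simp add: ereal_arctan_def abs_le_iff)
qed (auto simp: ereal_arctan_def)

lemma borel_measurable_ereal_arctan [measurable]: "ereal_arctan \<in> borel_measurable borel"
proof -
  have "ereal_arctan =
      (\<lambda>z. if z = \<infinity> then pi/2 else if z = -\<infinity> then -pi/2 else arctan (real_of_ereal z))"
    by (auto simp: fun_eq_iff ereal_arctan_def split: ereal.split)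
  also have "\<dots> \<in> borel_measurable borel"
    by measurable
  finally show ?thesis .
qed

lemma countable_subset_maximising:
  fixes g :: "'i set \<Rightarrow> real"
  assumes mono: "\<And>J J'. J \<subseteq> J' \<Longrightarrow> J' \<subseteq> I \<Longrightarrow> countable J' \<Longrightarrow> g J \<le> g J'"
    and bounded: "\<And>J. J \<subseteq> I \<Longrightarrow> countable J \<Longrightarrow> g J \<le> B"
  obtains K where "K \<subseteq> I" "countable K" "\<forall>J\<subseteq>I. countable J \<longrightarrow> g J \<le> g K"
proof -
  define C where "C = {g J | J. J \<subseteq> I \<and> countable J}"
  have C: "C \<noteq> {}" "bdd_above C"
    unfolding C_def using bounded by (auto intro!: bdd_aboveI[where M=B])
  have "\<exists>J \<subseteq> I. countable J \<and> Sup C - 1 / Suc n < g J" for n :: nat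
  proof -
    have "Sup C - 1 / Suc n < Sup C"
      by simp
    then obtain c where "c \<in> C" "Sup C - 1 / Suc n < c"
      using less_cSup_iff[OF C] by blast
    then show ?thesis
      unfolding C_def by blast
  qed
  then obtain J where J: "\<And>n. J n \<subseteq> I" "\<And>n. countable (J n)" "\<And>n. Sup C - 1 / Suc n < g (J n)"
    by metis
  define K where "K = (\<Union>n. J n)"
  have K: "K \<subseteq> I" "countable K"
    using J unfolding K_def by auto
  have "Sup C \<le> g K"
  proof (rule field_le_epsilon)
    fix e :: real
    assume "0 < e"
    then obtain n :: nat where "inverse (Suc n) < e"
      using reals_Archimedean by blast
    then have "Sup C < g (J n) + e"
      using J(3)[of n] unfolding inverse_eq_divide by linarith
    also have "g (J n) \<le> g K"
      using K by (intro mono) (auto simp: K_def)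
    finally show "Sup C \<le> g K + e"
      by simp
  qed
  moreover have "g J \<le> Sup C" if "J \<subseteq> I" "countable J" for J
    using that C by (intro cSup_upper) (auto simp: C_def)
  ultimately have "\<forall>J\<subseteq>I. countable J \<longrightarrow> g J \<le> g K"
    by (meson order_trans)
  with K show ?thesis
    by (rule that)
qed

text \<open>Maximise \<open>E[arctan (sup\<^sub>j\<^sub>\<in>\<^sub>J A\<^sub>j)]\<close> over countable \<open>J\<close>; adjoining any \<open>A\<^sub>i\<close> to a
maximiser increases the bounded integrand but not its integral, so it changes nothing a.e.\<close>

lemma countable_subfamily_SUP_dominates_AE:
  fixes A :: "'i \<Rightarrow> 'a \<Rightarrow> ereal"
  assumes "prob_space M" and meas: "\<And>i. i \<in> I \<Longrightarrow> A i \<in> borel_measurable M"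
  obtains K where "K \<subseteq> I" "countable K" "\<forall>i\<in>I. AE \<omega> in M. A i \<omega> \<le> (SUP j\<in>K. A j \<omega>)"
proof -
  interpret prob_space M by fact
  define g where "g J = (\<integral>\<omega>. ereal_arctan (SUP j\<in>J. A j \<omega>) \<partial>M)" for J
  have integrable: "integrable M (\<lambda>\<omega>. ereal_arctan (SUP j\<in>J. A j \<omega>))"
    if "J \<subseteq> I" "countable J" for J
    using that meas abs_ereal_arctan_le
    by (intro integrable_const_bound[where B="pi/2"]
        measurable_compose[OF _ borel_measurable_ereal_arctan] borel_measurable_SUP) auto
  have arctan_SUP_mono: "ereal_arctan (SUP j\<in>J. A j \<omega>) \<le> ereal_arctan (SUP j\<in>J'. A j \<omega>)"
    if "J \<subseteq> J'" for J J' \<omega>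
    using that by (intro monoD[OF strict_mono_mono[OF strict_mono_ereal_arctan]] SUP_subset_mono) auto
  have g_mono: "g J \<le> g J'" if "J \<subseteq> J'" "J' \<subseteq> I" "countable J'" for J J'
    unfolding g_def using that integrable[of J] integrable[of J'] countable_subset[OF that(1,3)]
    by (intro integral_mono arctan_SUP_mono) auto
  have "g J \<le> pi/2" if "J \<subseteq> I" "countable J" for J
  proof -
    have "g J \<le> (\<integral>\<omega>. pi/2 \<partial>M)"
      unfolding g_def using integrable[OF that]
      by (intro integral_mono integrable_const abs_le_D1[OF abs_ereal_arctan_le])
    then show ?thesis
      by (simp add: prob_space)
  qed
  with g_mono obtain K where K: "K \<subseteq> I" "countable K"
    and K_max: "\<forall>J\<subseteq>I. countable J \<longrightarrow> g J \<le> g K"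
    by (rule countable_subset_maximising)
  have "\<forall>i\<in>I. AE \<omega> in M. A i \<omega> \<le> (SUP j\<in>K. A j \<omega>)"
  proof
    fix i
    assume i: "i \<in> I"
    define D where "D \<omega> = ereal_arctan (SUP j\<in>insert i K. A j \<omega>) - ereal_arctan (SUP j\<in>K. A j \<omega>)"
      for \<omega>
    have D_nonneg: "0 \<le> D \<omega>" for \<omega>
      unfolding D_def using arctan_SUP_mono[of K "insert i K"] by auto
    have int_D: "integrable M D"
      unfolding D_def using K i by (intro Bochner_Integration.integrable_diff integrable) auto
    have "integral\<^sup>L M D = g (insert i K) - g K"
      unfolding D_def g_def using K i by (intro Bochner_Integration.integral_diff integrable) auto
    also have "\<dots> \<le> 0"
      using K i K_max by auto
    finally have "integral\<^sup>L M D = 0"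
      using D_nonneg by (simp add: antisym)
    then have "AE \<omega> in M. D \<omega> = 0"
      using integral_nonneg_eq_0_iff_AE[OF int_D] D_nonneg by simp
    then show "AE \<omega> in M. A i \<omega> \<le> (SUP j\<in>K. A j \<omega>)"
    proof eventually_elim
      case (elim \<omega>)
      then have "(SUP j\<in>insert i K. A j \<omega>) = (SUP j\<in>K. A j \<omega>)"
        using strict_mono_eq[OF strict_mono_ereal_arctan] unfolding D_def by simp
      then show ?case
        by (metis SUP_upper insertI1)
    qed
  qed
  with K show ?thesis
    by (rule that)
qed

lemma is_ess_sup_exists:
  fixes A :: "'i \<Rightarrow> 'a \<Rightarrow> ereal"
  assumes P: "prob_space M" and sub: "subalgebra M G"
    and meas: "\<And>i. i \<in> I \<Longrightarrow> A i \<in> borel_measurable G"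
  shows "\<exists>Y. is_ess_sup M G I A Y"
proof -
  have "\<And>i. i \<in> I \<Longrightarrow> A i \<in> borel_measurable M"
    using meas measurable_from_subalg[OF sub] by blast
  then obtain K where K: "K \<subseteq> I" "countable K"
    and dominates: "\<forall>i\<in>I. AE \<omega> in M. A i \<omega> \<le> (SUP j\<in>K. A j \<omega>)"
    by (rule countable_subfamily_SUP_dominates_AE[OF P])
  have "is_ess_sup M G I A (\<lambda>\<omega>. SUP j\<in>K. A j \<omega>)"
    unfolding is_ess_sup_def
  proof (intro conjI ballI impI)
    show "(\<lambda>\<omega>. SUP j\<in>K. A j \<omega>) \<in> borel_measurable G"
      using K meas by (intro borel_measurable_SUP) auto
    show "AE \<omega> in M. A i \<omega> \<le> (SUP j\<in>K. A j \<omega>)" if "i \<in> I" for i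
      using dominates that by blast
    fix Z :: "'a \<Rightarrow> ereal"
    assume "\<forall>i\<in>I. AE \<omega> in M. A i \<omega> \<le> Z \<omega>"
    then have "AE \<omega> in M. \<forall>j\<in>K. A j \<omega> \<le> Z \<omega>"
      using K by (subst AE_ball_countable) auto
    then show "AE \<omega> in M. (SUP j\<in>K. A j \<omega>) \<le> Z \<omega>"
      by (auto intro: SUP_least)
  qed
  then show ?thesis
    by blast
qed

lemma is_ess_supD:
  assumes "is_ess_sup M G I A Y"
  shows is_ess_sup_measurable: "Y \<in> borel_measurable G"
    and is_ess_sup_upper: "i \<in> I \<Longrightarrow> AE \<omega> in M. A i \<omega> \<le> Y \<omega>"
    and is_ess_sup_least: "Z \<in> borel_measurable G \<Longrightarrow> (\<And>i. i \<in> I \<Longrightarrow> AE \<omega> in M. A i \<omega> \<le> Z \<omega>) \<Longrightarrow>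
      AE \<omega> in M. Y \<omega> \<le> Z \<omega>"
  using assms unfolding is_ess_sup_def by blast+

lemma is_ess_infD:
  assumes "is_ess_inf M G I A Y"
  shows is_ess_inf_measurable: "Y \<in> borel_measurable G"
    and is_ess_inf_lower: "i \<in> I \<Longrightarrow> AE \<omega> in M. Y \<omega> \<le> A i \<omega>"
    and is_ess_inf_greatest: "Z \<in> borel_measurable G \<Longrightarrow> (\<And>i. i \<in> I \<Longrightarrow> AE \<omega> in M. Z \<omega> \<le> A i \<omega>) \<Longrightarrow>
      AE \<omega> in M. Z \<omega> \<le> Y \<omega>"
  using assms unfolding is_ess_inf_def by blast+

lemma is_ess_inf_uminus_is_ess_sup:
  assumes "is_ess_sup M G I (\<lambda>i \<omega>. - A i \<omega>) Y"
  shows "is_ess_inf M G I A (\<lambda>\<omega>. - Y \<omega>)"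
  unfolding is_ess_inf_def
proof (intro conjI ballI impI)
  show "(\<lambda>\<omega>. - Y \<omega>) \<in> borel_measurable G"
    using is_ess_sup_measurable[OF assms] by simp
  show "AE \<omega> in M. - Y \<omega> \<le> A i \<omega>" if "i \<in> I" for i
    using is_ess_sup_upper[OF assms that] by (simp add: ereal_uminus_le_reorder)
  show "AE \<omega> in M. Z \<omega> \<le> - Y \<omega>"
    if "Z \<in> borel_measurable G" "\<forall>i\<in>I. AE \<omega> in M. Z \<omega> \<le> A i \<omega>" for Z
  proof -
    have "AE \<omega> in M. Y \<omega> \<le> - Z \<omega>"
      using that by (intro is_ess_sup_least[OF assms]) auto
    then show ?thesis
      by eventually_elim (metis ereal_minus_le_minus ereal_uminus_uminus)
  qed
qed

lemma is_ess_sup_fam_ess_sup: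
  assumes "prob_space M" "subalgebra M G" "\<And>i. i \<in> I \<Longrightarrow> A i \<in> borel_measurable G"
  shows "is_ess_sup M G I A (fam_ess_sup M G I A)"
  unfolding fam_ess_sup_def using is_ess_sup_exists[OF assms] by (rule someI_ex)

lemma is_ess_inf_fam_ess_inf:
  assumes "prob_space M" "subalgebra M G" "\<And>i. i \<in> I \<Longrightarrow> A i \<in> borel_measurable G"
  shows "is_ess_inf M G I A (fam_ess_inf M G I A)"
proof -
  have "\<And>i. i \<in> I \<Longrightarrow> (\<lambda>\<omega>. - A i \<omega>) \<in> borel_measurable G"
    by (rule borel_measurable_uminus_ereal[OF assms(3)])
  then have "\<exists>Y. is_ess_sup M G I (\<lambda>i \<omega>. - A i \<omega>) Y"
    by (rule is_ess_sup_exists[OF assms(1,2)])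
  then obtain Y where "is_ess_sup M G I (\<lambda>i \<omega>. - A i \<omega>) Y" ..
  then have "is_ess_inf M G I A (\<lambda>\<omega>. - Y \<omega>)"
    by (rule is_ess_inf_uminus_is_ess_sup)
  then show ?thesis
    unfolding fam_ess_inf_def by (rule someI[where P = "is_ess_inf M G I A"])
qed

lemma is_ess_sup_mono_index:
  assumes "is_ess_sup M G I A Y" "is_ess_sup M G J A Y'" "I \<subseteq> J"
  shows "AE \<omega> in M. Y \<omega> \<le> Y' \<omega>"
proof (rule is_ess_sup_least[OF assms(1)])
  show "Y' \<in> borel_measurable G"
    by (rule is_ess_sup_measurable[OF assms(2)])
  show "AE \<omega> in M. A i \<omega> \<le> Y' \<omega>" if "i \<in> I" for i
    using that assms(3) by (intro is_ess_sup_upper[OF assms(2)]) auto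
qed

lemma is_ess_inf_fam_ess_limsup:
  assumes "prob_space M" "subalgebra M G" "\<And>y. y \<in> D \<Longrightarrow> A y \<in> borel_measurable G"
  shows "is_ess_inf M G {0..} (\<lambda>x. fam_ess_sup M G {y\<in>D. x \<le> y} A) (fam_ess_limsup M G D A)"
  unfolding fam_ess_limsup_def using assms
  by (intro is_ess_inf_fam_ess_inf is_ess_sup_measurable[OF is_ess_sup_fam_ess_sup]) auto

lemma AE_fam_ess_limsup_gt_imp_ge:
  fixes A B :: "real \<Rightarrow> 'a \<Rightarrow> ereal" and a c :: ereal
  assumes P: "prob_space M" and sub: "subalgebra M G"
    and A: "\<And>y. y \<in> D \<Longrightarrow> A y \<in> borel_measurable G"
    and B: "\<And>y. y \<in> D \<Longrightarrow> B y \<in> borel_measurable G"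
    and AB: "\<And>y. y \<in> D \<Longrightarrow> n \<le> y \<Longrightarrow> AE \<omega> in M. c < A y \<omega> \<longrightarrow> a < B y \<omega>"
  shows "AE \<omega> in M. c < fam_ess_limsup M G D A \<omega> \<longrightarrow> a \<le> fam_ess_limsup M G D B \<omega>"
proof -
  define SA where "SA x = fam_ess_sup M G {y\<in>D. x \<le> y} A" for x
  define SB where "SB x = fam_ess_sup M G {y\<in>D. x \<le> y} B" for x
  define LA where "LA = fam_ess_limsup M G D A"
  define LB where "LB = fam_ess_limsup M G D B"
  have SA: "is_ess_sup M G {y\<in>D. x \<le> y} A (SA x)" for x
    unfolding SA_def using P sub A by (intro is_ess_sup_fam_ess_sup) auto
  have SB: "is_ess_sup M G {y\<in>D. x \<le> y} B (SB x)" for x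
    unfolding SB_def using P sub B by (intro is_ess_sup_fam_ess_sup) auto
  have LA: "is_ess_inf M G {0..} SA LA" and LB: "is_ess_inf M G {0..} SB LB"
    unfolding SA_def SB_def LA_def LB_def using P sub A B by (auto intro: is_ess_inf_fam_ess_limsup)
  have [measurable]: "SB x \<in> borel_measurable G" "LA \<in> borel_measurable G" for x
    using is_ess_sup_measurable[OF SB] is_ess_inf_measurable[OF LA] by auto
  have tail: "AE \<omega> in M. c < LA \<omega> \<longrightarrow> a < SB x \<omega>" if "0 \<le> x" "n \<le> x" for x
  proof -
    \<comment> \<open>Where \<open>SB x \<le> a\<close>, every \<open>A y\<close> with \<open>y \<ge> x\<close> is at most \<open>c\<close>.\<close>
    define W where "W \<omega> = (if SB x \<omega> \<le> a then c else \<infinity>)" for \<omega>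
    have "W \<in> borel_measurable G"
      unfolding W_def by measurable
    moreover have "AE \<omega> in M. A y \<omega> \<le> W \<omega>" if "y \<in> D" "x \<le> y" for y
    proof -
      have "AE \<omega> in M. B y \<omega> \<le> SB x \<omega>"
        using that by (intro is_ess_sup_upper[OF SB]) simp
      moreover have "AE \<omega> in M. c < A y \<omega> \<longrightarrow> a < B y \<omega>"
        using AB that \<open>n \<le> x\<close> by simp
      ultimately show ?thesis
        by eventually_elim (auto simp: W_def not_less)
    qed
    ultimately have "AE \<omega> in M. SA x \<omega> \<le> W \<omega>"
      by (intro is_ess_sup_least[OF SA]) auto
    moreover have "AE \<omega> in M. LA \<omega> \<le> SA x \<omega>"
      using \<open>0 \<le> x\<close> by (intro is_ess_inf_lower[OF LA]) simp
    ultimately show ?thesis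
      by eventually_elim (auto simp: W_def not_le split: if_splits)
  qed
  define Z where "Z \<omega> = (if c < LA \<omega> then a else -\<infinity>)" for \<omega>
  have "Z \<in> borel_measurable G"
    unfolding Z_def by measurable
  moreover have "AE \<omega> in M. Z \<omega> \<le> SB x \<omega>" if "0 \<le> x" for x
  proof -
    have "AE \<omega> in M. c < LA \<omega> \<longrightarrow> a < SB (max x n) \<omega>"
      using that by (intro tail) auto
    moreover have "AE \<omega> in M. SB (max x n) \<omega> \<le> SB x \<omega>"
      by (rule is_ess_sup_mono_index[OF SB SB]) auto
    ultimately show ?thesis
      by eventually_elim (auto simp: Z_def)
  qed
  ultimately have "AE \<omega> in M. Z \<omega> \<le> LB \<omega>"
    by (intro is_ess_inf_greatest[OF LB]) auto
  then show ?thesis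
    unfolding LA_def LB_def Z_def by eventually_elim (auto split: if_splits)
qed

lemma lower_bound_scaled_exp_minus_one:
  fixes c r s s0 lam :: real
  assumes "0 \<le> c" "c < r" "0 \<le> s0" "s0 \<le> s" "0 < s" "0 < lam"
  shows "c + c^2 * s0 / (2 * lam) < lam / s * (exp (r * s / lam) - 1)"
proof -
  define u where "u = r * s / lam"
  have "0 \<le> u"
    unfolding u_def using assms by simp
  then have "lam / s * (u + u^2 / 2) \<le> lam / s * (exp u - 1)"
    using exp_lower_Taylor_quadratic[of u] assms by (intro mult_left_mono) auto
  moreover have "lam / s * (u + u^2 / 2) = r + r^2 * s / (2 * lam)"
    unfolding u_def using assms by (simp add: field_simps power2_eq_square)
  moreover have "c^2 * s0 \<le> r^2 * s"
    using assms by (intro mult_mono power_mono) auto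
  then have "c^2 * s0 / (2 * lam) \<le> r^2 * s / (2 * lam)"
    using assms by (intro divide_right_mono) auto
  ultimately show ?thesis
    using assms unfolding u_def by linarith
qed

lemma pareto_rate_eq_exp_exp_rate:
  assumes "0 < bond M F \<pi> t T \<omega>" "t < T"
  shows "pareto_rate M F \<pi> lam t T \<omega> =
           lam / (T - t) * (exp (exp_rate M F \<pi> t T \<omega> * (T - t) / lam) - 1)"
  using assms by (simp add: pareto_rate_def exp_rate_def powr_def)

lemma borel_measurable_exp_rate [measurable]:
  assumes [measurable]: "\<pi> t \<in> borel_measurable (F t)"
  shows "exp_rate M F \<pi> t T \<in> borel_measurable (F t)"
  unfolding exp_rate_def bond_def by measurable

lemma borel_measurable_pareto_rate [measurable]:
  assumes [measurable]: "\<pi> t \<in> borel_measurable (F t)"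
  shows "pareto_rate M F \<pi> lam t T \<in> borel_measurable (F t)"
  unfolding pareto_rate_def bond_def by measurable

lemma AE_bond_pos:
  assumes "prob_space M" "usual_conditions M F" "pricing_kernel M F \<pi>" "0 \<le> t" "t \<le> T"
  shows "AE \<omega> in M. 0 < bond M F \<pi> t T \<omega>"
proof -
  interpret prob_space M by fact
  interpret finite_measure_subalgebra M "F t"
    using assms(2,4) by unfold_locales (auto simp: usual_conditions_def)
  have "AE \<omega> in M. 0 < real_cond_exp M (F t) (\<pi> T) \<omega>"
    using assms(3-5) by (intro real_cond_exp_gr_c) (auto simp: pricing_kernel_def)
  moreover have "AE \<omega> in M. 0 < \<pi> t \<omega>"
    using assms(3,4) by (auto simp: pricing_kernel_def)
  ultimately show ?thesis
    unfolding bond_def by eventually_elim simp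
qed

lemma exp_rate_neg_iff_bond_gt_one:
  assumes "0 < bond M F \<pi> t T \<omega>" "t < T"
  shows "exp_rate M F \<pi> t T \<omega> < 0 \<longleftrightarrow> 1 < bond M F \<pi> t T \<omega>"
  using assms by (simp add: exp_rate_def zero_less_divide_iff)

lemma (in sigma_finite_subalgebra) null_set_if_cond_exp_eventually_dominates:
  fixes X :: "real \<Rightarrow> 'a \<Rightarrow> real"
  assumes A: "A \<in> sets F" and Y: "integrable M Y" "AE \<omega> in M. 0 < Y \<omega>"
    and X: "\<forall>\<^sub>F T in at_top. integrable M (X T) \<and> (AE \<omega> in M. 0 \<le> X T \<omega>) \<and>
              (AE \<omega> in M. \<omega> \<in> A \<longrightarrow> Y \<omega> \<le> real_cond_exp M F (X T) \<omega>)"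
    and lim: "Liminf at_top (\<lambda>T. ereal (\<integral>\<omega>. X T \<omega> \<partial>M)) = 0"
  shows "A \<in> null_sets M"
proof -
  have A_M: "A \<in> sets M"
    using A subalg by (auto simp: subalgebra_def)
  have int_YA: "integrable M (\<lambda>\<omega>. Y \<omega> * indicator A \<omega>)"
    using integrable_real_mult_indicator[OF A_M Y(1)] .
  have YA_nonneg: "AE \<omega> in M. 0 \<le> Y \<omega> * indicator A \<omega>"
    using Y(2) by eventually_elim (simp add: indicator_def)
  have eventually_le:
    "\<forall>\<^sub>F T in at_top. ereal (\<integral>\<omega>. Y \<omega> * indicator A \<omega> \<partial>M) \<le> ereal (\<integral>\<omega>. X T \<omega> \<partial>M)"
    using X
  proof eventually_elim
    case (elim T)
    then have int_X: "integrable M (X T)" and X_nonneg: "AE \<omega> in M. 0 \<le> X T \<omega>"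
      and dominated: "AE \<omega> in M. \<omega> \<in> A \<longrightarrow> Y \<omega> \<le> real_cond_exp M F (X T) \<omega>"
      by auto
    have "(\<integral>\<omega>. Y \<omega> * indicator A \<omega> \<partial>M) \<le> (\<integral>\<omega>. real_cond_exp M F (X T) \<omega> * indicator A \<omega> \<partial>M)"
      using dominated
      by (intro integral_mono_AE int_YA integrable_real_mult_indicator[OF A_M] real_cond_exp_int(1)[OF int_X])
        (auto elim!: eventually_mono simp: indicator_def)
    also have "\<dots> = (\<integral>\<omega>. X T \<omega> * indicator A \<omega> \<partial>M)"
      using real_cond_exp_intA[OF int_X A] by (simp add: set_lebesgue_integral_def mult.commute)
    also have "\<dots> \<le> (\<integral>\<omega>. X T \<omega> \<partial>M)"
      using X_nonneg
      by (intro integral_mono_AE integrable_real_mult_indicator[OF A_M int_X] int_X)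
        (auto elim!: eventually_mono simp: indicator_def)
    finally show ?case
      by simp
  qed
  have "(\<integral>\<omega>. Y \<omega> * indicator A \<omega> \<partial>M) \<le> 0"
    using Liminf_bounded[OF eventually_le] lim by simp
  then have "AE \<omega> in M. Y \<omega> * indicator A \<omega> = 0"
    using integral_nonneg_eq_0_iff_AE[OF int_YA YA_nonneg] integral_nonneg_AE[OF YA_nonneg] by simp
  with Y(2) have "AE \<omega> in M. \<omega> \<notin> A"
    by eventually_elim (auto simp: indicator_def split: if_splits)
  then show ?thesis
    using AE_iff_null_sets[OF A_M] by simp
qed

lemma AE_ess_sup_exp_rate_nonneg:
  assumes P: "prob_space M" and U: "usual_conditions M F" and K: "pricing_kernel M F \<pi>"
    and t: "0 \<le> t"
    and S: "is_ess_sup M (F t) {T\<in>{t<..}. x \<le> T} (\<lambda>T \<omega>. ereal (exp_rate M F \<pi> t T \<omega>)) S"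
  shows "AE \<omega> in M. 0 \<le> S \<omega>"
proof -
  interpret prob_space M by fact
  have sub: "subalgebra M (F t)"
    using U t unfolding usual_conditions_def by blast
  interpret finite_measure_subalgebra M "F t"
    by unfold_locales (rule sub)
  have \<pi>: "\<And>s. 0 \<le> s \<Longrightarrow> integrable M (\<pi> s)" "\<And>s. 0 \<le> s \<Longrightarrow> AE \<omega> in M. 0 < \<pi> s \<omega>"
    and lim: "Liminf at_top (\<lambda>s. ereal (\<integral>\<omega>. \<pi> s \<omega> \<partial>M)) = 0"
    using K unfolding pricing_kernel_def by auto
  define A where "A = {\<omega> \<in> space M. S \<omega> < 0}"
  have [measurable]: "S \<in> borel_measurable (F t)"
    by (rule is_ess_sup_measurable[OF S])
  have "A = {\<omega> \<in> space (F t). S \<omega> < 0}"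
    unfolding A_def using subalg by (simp add: subalgebra_def)
  also have "\<dots> \<in> sets (F t)"
    by measurable
  finally have A_F: "A \<in> sets (F t)" .
  have "\<forall>\<^sub>F T in at_top. integrable M (\<pi> T) \<and> (AE \<omega> in M. 0 \<le> \<pi> T \<omega>) \<and>
      (AE \<omega> in M. \<omega> \<in> A \<longrightarrow> \<pi> t \<omega> \<le> real_cond_exp M (F t) (\<pi> T) \<omega>)"
    using eventually_gt_at_top[of "max x t"]
  proof eventually_elim
    case (elim T)
    then have T: "t < T" "x \<le> T" "0 \<le> T"
      using t by auto
    have "AE \<omega> in M. ereal (exp_rate M F \<pi> t T \<omega>) \<le> S \<omega>"
      using T by (intro is_ess_sup_upper[OF S]) simp
    then have "AE \<omega> in M. \<omega> \<in> A \<longrightarrow> \<pi> t \<omega> \<le> real_cond_exp M (F t) (\<pi> T) \<omega>"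
      using AE_bond_pos[OF P U K t less_imp_le[OF T(1)]] \<pi>(2)[OF t]
    proof eventually_elim
      case (elim \<omega>)
      show ?case
      proof
        assume "\<omega> \<in> A"
        then have "S \<omega> < 0"
          unfolding A_def by simp
        with elim(1) have "ereal (exp_rate M F \<pi> t T \<omega>) < 0"
          by (rule le_less_trans)
        then have "1 < bond M F \<pi> t T \<omega>"
          using exp_rate_neg_iff_bond_gt_one[OF elim(2) T(1)] by simp
        then show "\<pi> t \<omega> \<le> real_cond_exp M (F t) (\<pi> T) \<omega>"
          using elim by (simp add: bond_def less_divide_eq)
      qed
    qed
    moreover have "AE \<omega> in M. 0 \<le> \<pi> T \<omega>"
      using \<pi>(2)[OF T(3)] by (auto elim: eventually_mono)
    ultimately show ?case
      using \<pi>(1)[OF T(3)] by blast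
  qed
  then have "A \<in> null_sets M"
    by (rule null_set_if_cond_exp_eventually_dominates[OF A_F \<pi>(1,2)[OF t] _ lim])
  then have "AE \<omega> in M. \<omega> \<notin> A"
    by (rule AE_not_in)
  then show ?thesis
    using AE_space by eventually_elim (auto simp: A_def not_less)
qed

lemma AE_long_exp_rate_nonneg:
  assumes P: "prob_space M" and U: "usual_conditions M F" and K: "pricing_kernel M F \<pi>"
    and t: "0 \<le> t"
  shows "AE \<omega> in M. 0 \<le> long_exp_rate M F \<pi> t \<omega>"
proof -
  have sub: "subalgebra M (F t)"
    using U t unfolding usual_conditions_def by blast
  have [measurable]: "\<pi> t \<in> borel_measurable (F t)"
    using K t unfolding pricing_kernel_def adapted_def by blast
  define R where "R T \<omega> = ereal (exp_rate M F \<pi> t T \<omega>)" for T \<omega>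
  have R_measurable: "R T \<in> borel_measurable (F t)" for T
    unfolding R_def by measurable
  define S where "S x = fam_ess_sup M (F t) {T\<in>{t<..}. x \<le> T} R" for x
  have "AE \<omega> in M. 0 \<le> S x \<omega>" for x
  proof (rule AE_ess_sup_exp_rate_nonneg[OF P U K t, of x])
    show "is_ess_sup M (F t) {T\<in>{t<..}. x \<le> T} (\<lambda>T \<omega>. ereal (exp_rate M F \<pi> t T \<omega>)) (S x)"
      unfolding S_def R_def[symmetric] by (intro is_ess_sup_fam_ess_sup P sub R_measurable)
  qed
  moreover have "is_ess_inf M (F t) {0..} S (long_exp_rate M F \<pi> t)"
    unfolding long_exp_rate_def S_def R_def[symmetric]
    by (intro is_ess_inf_fam_ess_limsup P sub R_measurable)
  ultimately show ?thesis
    using is_ess_inf_greatest[of M "F t" "{0..}" S "long_exp_rate M F \<pi> t" "\<lambda>_. 0"] by simp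
qed

lemma AE_long_exp_rate_gt_imp_long_pareto_rate_ge:
  assumes P: "prob_space M" and U: "usual_conditions M F" and K: "pricing_kernel M F \<pi>"
    and lam: "0 < lam" and t: "0 \<le> t" and c: "0 \<le> c" and s0: "0 \<le> s0"
  shows "AE \<omega> in M. ereal c < long_exp_rate M F \<pi> t \<omega> \<longrightarrow>
           ereal (c + c^2 * s0 / (2 * lam)) \<le> long_pareto_rate M F \<pi> lam t \<omega>"
proof -
  have sub: "subalgebra M (F t)"
    using U t unfolding usual_conditions_def by blast
  have [measurable]: "\<pi> t \<in> borel_measurable (F t)"
    using K t unfolding pricing_kernel_def adapted_def by blast
  show ?thesis
    unfolding long_exp_rate_def long_pareto_rate_def
  proof (rule AE_fam_ess_limsup_gt_imp_ge[OF P sub, where n="t + s0"])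
    fix T
    assume T: "T \<in> {t<..}" "t + s0 \<le> T"
    then have "t \<le> T"
      by simp
    show "AE \<omega> in M. ereal c < ereal (exp_rate M F \<pi> t T \<omega>) \<longrightarrow>
        ereal (c + c^2 * s0 / (2 * lam)) < ereal (pareto_rate M F \<pi> lam t T \<omega>)"
      using AE_bond_pos[OF P U K t \<open>t \<le> T\<close>]
    proof eventually_elim
      case (elim \<omega>)
      show ?case
      proof
        assume "ereal c < ereal (exp_rate M F \<pi> t T \<omega>)"
        then have "c + c^2 * s0 / (2 * lam) <
            lam / (T - t) * (exp (exp_rate M F \<pi> t T \<omega> * (T - t) / lam) - 1)"
          by (intro lower_bound_scaled_exp_minus_one) (use T c s0 lam in auto)
        then show "ereal (c + c^2 * s0 / (2 * lam)) < ereal (pareto_rate M F \<pi> lam t T \<omega>)"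
          using elim T by (simp add: pareto_rate_eq_exp_exp_rate)
      qed
    qed
  next
    fix T
    show "(\<lambda>\<omega>. ereal (exp_rate M F \<pi> t T \<omega>)) \<in> borel_measurable (F t)"
      by measurable
    show "(\<lambda>\<omega>. ereal (pareto_rate M F \<pi> lam t T \<omega>)) \<in> borel_measurable (F t)"
      by measurable
  qed
qed

lemma ereal_obtain_inverse_Suc_less:
  fixes z :: ereal
  assumes "0 < z"
  obtains k :: nat where "ereal (1 / Suc k) < z"
proof (cases z)
  case (real r)
  then obtain k :: nat where "inverse (Suc k) < r"
    using assms reals_Archimedean by auto
  with real that show ?thesis
    by (simp add: inverse_eq_divide)
next
  case PInf
  with that[of 0] show ?thesis
    by simp
next
  case MInf
  with assms show ?thesis
    by simp
qed

lemma ereal_eq_infinity_if_nat_le: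
  fixes z :: ereal
  assumes "\<And>m :: nat. ereal (real m) \<le> z"
  shows "z = \<infinity>"
proof (cases z)
  case (real r)
  obtain m :: nat where "r < real m"
    using reals_Archimedean2 by blast
  with assms[of m] real show ?thesis
    by simp
next
  case MInf
  with assms[of 0] show ?thesis
    by simp
qed simp

lemma AE_long_pareto_rate_eq_infinity:
  assumes P: "prob_space M" and U: "usual_conditions M F" and K: "pricing_kernel M F \<pi>"
    and lam: "0 < lam" and t: "0 \<le> t"
  shows "AE \<omega> in M. 0 < long_exp_rate M F \<pi> t \<omega> \<longrightarrow> long_pareto_rate M F \<pi> lam t \<omega> = \<infinity>"
proof -
  have "AE \<omega> in M. \<forall>k m :: nat. ereal (1 / Suc k) < long_exp_rate M F \<pi> t \<omega> \<longrightarrow>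
      ereal (real m) \<le> long_pareto_rate M F \<pi> lam t \<omega>"
  proof (subst AE_all_countable, intro allI, subst AE_all_countable, intro allI)
    fix k m :: nat
    define c where "c = 1 / real (Suc k)"
    have c: "0 \<le> c" and s0: "0 \<le> 2 * lam * m / c^2"
      using lam by (simp_all add: c_def)
    have "c + c^2 * (2 * lam * m / c^2) / (2 * lam) = c + m"
      using lam by (simp add: c_def field_simps)
    with AE_long_exp_rate_gt_imp_long_pareto_rate_ge[OF P U K lam t c s0]
    have "AE \<omega> in M. ereal c < long_exp_rate M F \<pi> t \<omega> \<longrightarrow>
        ereal (c + m) \<le> long_pareto_rate M F \<pi> lam t \<omega>"
      by simp
    then show "AE \<omega> in M. ereal (1 / Suc k) < long_exp_rate M F \<pi> t \<omega> \<longrightarrow>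
        ereal (real m) \<le> long_pareto_rate M F \<pi> lam t \<omega>"
    proof eventually_elim
      case (elim \<omega>)
      show ?case
      proof
        assume "ereal (1 / Suc k) < long_exp_rate M F \<pi> t \<omega>"
        have "ereal (real m) \<le> ereal (c + m)"
          using c by simp
        also have "\<dots> \<le> long_pareto_rate M F \<pi> lam t \<omega>"
          using elim \<open>ereal (1 / Suc k) < long_exp_rate M F \<pi> t \<omega>\<close> by (simp add: c_def)
        finally show "ereal (real m) \<le> long_pareto_rate M F \<pi> lam t \<omega>" .
      qed
    qed
  qed
  then show ?thesis
  proof eventually_elim
    case (elim \<omega>)
    show ?case
    proof
      assume "0 < long_exp_rate M F \<pi> t \<omega>"
      then obtain k :: nat where "ereal (1 / Suc k) < long_exp_rate M F \<pi> t \<omega>"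
        by (rule ereal_obtain_inverse_Suc_less)
      with elim show "long_pareto_rate M F \<pi> lam t \<omega> = \<infinity>"
        by (intro ereal_eq_infinity_if_nat_le) blast
    qed
  qed
qed

theorem proposition3:
  fixes M :: "'a measure" and F :: "real \<Rightarrow> 'a measure" and \<pi> :: "real \<Rightarrow> 'a \<Rightarrow> real"
    and lam t :: real
  assumes "prob_space M"
    and "usual_conditions M F"
    and "pricing_kernel M F \<pi>"
    and "lam > 0" and "t \<ge> 0"
  shows "((AE \<omega> in M. long_exp_rate M F \<pi> t \<omega> > 0) \<longrightarrow>
            (AE \<omega> in M. long_pareto_rate M F \<pi> lam t \<omega> = \<infinity>)) \<and>
         ((AE \<omega> in M. long_pareto_rate M F \<pi> lam t \<omega> < \<infinity>) \<longrightarrow>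
            (AE \<omega> in M. long_exp_rate M F \<pi> t \<omega> = 0))"
proof -
  have "AE \<omega> in M. 0 \<le> long_exp_rate M F \<pi> t \<omega>"
    using assms(1-3,5) by (rule AE_long_exp_rate_nonneg)
  moreover have "AE \<omega> in M. 0 < long_exp_rate M F \<pi> t \<omega> \<longrightarrow> long_pareto_rate M F \<pi> lam t \<omega> = \<infinity>"
    using assms by (rule AE_long_pareto_rate_eq_infinity)
  ultimately have "AE \<omega> in M. (0 < long_exp_rate M F \<pi> t \<omega> \<longrightarrow> long_pareto_rate M F \<pi> lam t \<omega> = \<infinity>)
      \<and> (long_pareto_rate M F \<pi> lam t \<omega> < \<infinity> \<longrightarrow> long_exp_rate M F \<pi> t \<omega> = 0)"
    by eventually_elim auto
  then show ?thesis
    by (auto elim: eventually_mono)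
qed

end
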